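(* Let $\rho\in\{1/2,1\}$, let $s>0$ and $\eta>0$ be real numbers, let $q\in\mathbb{C}$, and let $\epsilon$ be real with $1<\epsilon\le 1+\rho$. Define $\ell:(0,\infty)\to\mathbb{R}$ by $$\ell(\gamma) = -\rho\log(1+\gamma s) + \rho\,\frac{|q|^2}{\gamma^{-1}+s} + (\epsilon-1)\log\gamma - \eta\gamma .$$ Then $\ell$ has a single stationary point on $(0,\infty)$, and this stationary point corresponds to a maximum of $\ell$.
   Context: This function arises in a sparse Bayesian learning scheme: $\rho=1/2$ corresponds to a real signal model and $\rho=1$ to a complex one; $\epsilon$ is the shape parameter and $\eta$ the (positive) rate parameter of a gamma hyperprior; $s=\mathbf{h}^H\mathbf{C}^{-1}\mathbf{h}$ and $q=\mathbf{y}^H\mathbf{C}^{-1}\mathbf{h}$ for a nonzero vector $\mathbf{h}$, a vector $\mathbf{y}$, and a Hermitian positive definite matrix $\mathbf{C}$, so in particular $s>0$. The domain of $\ell$ is $(0,\infty)$. *)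

theory Defs
  imports "HOL-Analysis.Analysis"
begin

definition sbl_ell :: "real \<Rightarrow> real \<Rightarrow> complex \<Rightarrow> real \<Rightarrow> real \<Rightarrow> real \<Rightarrow> real" where
  "sbl_ell \<rho> s q \<epsilon> \<eta> \<gamma> =
     - \<rho> * ln (1 + \<gamma> * s) + \<rho> * ((cmod q)\<^sup>2 / (inverse \<gamma> + s))
     + (\<epsilon> - 1) * ln \<gamma> - \<eta> * \<gamma>"

end

theory Submission
  imports Defs
begin

text \<open>
  The derivative of \<open>\<ell>\<close> is \<open>N(\<gamma>) / (1 + \<gamma> s)\<^sup>2\<close> with
  \<open>N(\<gamma>) = - \<eta> s\<^sup>2 \<gamma>\<^sup>2 + (s\<^sup>2 (\<epsilon> - 1 - \<rho>) - 2 \<eta> s) \<gamma> + c + (\<epsilon> - 1) / \<gamma>\<close>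
  for a constant \<open>c\<close>. Since \<open>\<epsilon> \<le> 1 + \<rho>\<close>, the quadratic and linear coefficients are negative and the
  coefficient of \<open>1/\<gamma>\<close> is positive, so \<open>N\<close> decreases strictly from \<open>+\<infinity>\<close> to \<open>-\<infinity>\<close>
  on \<open>(0, \<infinity>)\<close>. Its unique zero is therefore the unique stationary point of \<open>\<ell>\<close>, and since
  \<open>\<ell>'\<close> changes sign from positive to negative there, it is the global maximum.
\<close>

lemma DERIV_sign_change_imp_max:
  fixes f f' :: "real \<Rightarrow> real"
  assumes deriv: "\<And>x. a < x \<Longrightarrow> (f has_real_derivative f' x) (at x)"
    and nonneg: "\<And>x. a < x \<Longrightarrow> x < g \<Longrightarrow> f' x \<ge> 0"
    and nonpos: "\<And>x. g < x \<Longrightarrow> f' x \<le> 0"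
    and "a < x" "a < g"
  shows "f x \<le> f g"
proof -
  have cont: "continuous_on {u..v} f" if "a < u" for u v
    using that by (auto intro!: continuous_at_imp_continuous_on DERIV_isCont deriv)
  show ?thesis
  proof (cases "x \<le> g")
    case True
    have "\<exists>y. (f has_real_derivative y) (at t) \<and> y \<ge> 0" if "x < t" "t < g" for t
      using that \<open>a < x\<close> by (intro exI[of _ "f' t"] conjI deriv nonneg) auto
    then show ?thesis
      using DERIV_nonneg_imp_increasing_open[OF True _ cont[OF \<open>a < x\<close>]] by blast
  next
    case False
    have "\<exists>y. (f has_real_derivative y) (at t) \<and> y \<le> 0" if "g < t" "t < x" for t
      using that \<open>a < g\<close> by (intro exI[of _ "f' t"] conjI deriv nonpos) auto
    then show ?thesis
      using DERIV_nonpos_imp_decreasing_open[of g x, OF _ _ cont[OF \<open>a < g\<close>]] False by auto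
  qed
qed

lemma quadratic_plus_reciprocal_strict_decreasing:
  fixes c3 c2 c1 c0 x y :: real
  assumes "c3 \<le> 0" "c2 \<le> 0" "c0 > 0" "0 < x" "x < y"
  shows "c3 * y\<^sup>2 + c2 * y + c1 + c0 / y < c3 * x\<^sup>2 + c2 * x + c1 + c0 / x"
proof -
  have "c3 * y\<^sup>2 \<le> c3 * x\<^sup>2"
    using assms by (intro mult_left_mono_neg power_mono) auto
  moreover have "c2 * y \<le> c2 * x"
    using assms by (simp add: mult_left_mono_neg)
  moreover have "c0 / y < c0 / x"
    using assms by (simp add: divide_strict_left_mono)
  ultimately show ?thesis by linarith
qed

lemma quadratic_plus_reciprocal_pos_near_zero:
  fixes c3 c2 c1 c0 :: real
  assumes "c0 > 0"
  shows "\<exists>x>0. c3 * x\<^sup>2 + c2 * x + c1 + c0 / x > 0"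
proof -
  define M where "M = \<bar>c3\<bar> + \<bar>c2\<bar> + \<bar>c1\<bar> + 1"
  define x where "x = min 1 (c0 / (2 * M))"
  have "M \<ge> 1" "x > 0" "x \<le> 1"
    using assms by (auto simp: M_def x_def)
  have "c0 / x \<ge> 2 * M"
    using \<open>M \<ge> 1\<close> \<open>x > 0\<close> by (auto simp: x_def pos_le_divide_eq field_simps min_def)
  moreover have "\<bar>c3 * x\<^sup>2\<bar> \<le> \<bar>c3\<bar>" "\<bar>c2 * x\<bar> \<le> \<bar>c2\<bar>"
    using \<open>x > 0\<close> \<open>x \<le> 1\<close> power_le_one[of x 2] by (simp_all add: abs_mult mult_left_le)
  ultimately have "c3 * x\<^sup>2 + c2 * x + c1 + c0 / x > 0"
    unfolding M_def by argo
  with \<open>x > 0\<close> show ?thesis by blast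
qed

lemma quadratic_plus_reciprocal_neg_at_infinity:
  fixes c3 c2 c1 c0 :: real
  assumes "c3 < 0" "c2 \<le> 0"
  shows "\<exists>x>0. c3 * x\<^sup>2 + c2 * x + c1 + c0 / x < 0"
proof -
  define x where "x = max 1 ((\<bar>c0\<bar> + \<bar>c1\<bar> + 1) / (- c3))"
  have "x \<ge> 1" by (simp add: x_def)
  have "c0 / x \<le> \<bar>c0\<bar> / x"
    using \<open>x \<ge> 1\<close> by (intro divide_right_mono) auto
  also have "\<dots> \<le> \<bar>c0\<bar>"
    using \<open>x \<ge> 1\<close> by (simp add: divide_le_eq mult_le_cancel_left1)
  finally have "c0 / x \<le> \<bar>c0\<bar>" .
  moreover have "c2 * x \<le> 0"
    using assms \<open>x \<ge> 1\<close> by (simp add: mult_nonpos_nonneg)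
  moreover have "c3 * x\<^sup>2 \<le> c3 * x"
    using assms \<open>x \<ge> 1\<close> by (intro mult_left_mono_neg) (auto simp: power2_eq_square)
  moreover have "c3 * x \<le> - (\<bar>c0\<bar> + \<bar>c1\<bar> + 1)"
    using assms by (auto simp: x_def max_def field_simps)
  ultimately show ?thesis
    using \<open>x \<ge> 1\<close> by (intro exI[of _ x]) auto
qed

lemma strict_decreasing_sign_change:
  fixes H :: "real \<Rightarrow> real"
  assumes cont: "continuous_on {l<..} H"
    and dec: "\<And>x y. l < x \<Longrightarrow> x < y \<Longrightarrow> H y < H x"
    and "l < a" "H a > 0" "l < b" "H b < 0"
  obtains g where "l < g" "H g = 0" "\<And>x. l < x \<Longrightarrow> x < g \<Longrightarrow> H x > 0" "\<And>x. g < x \<Longrightarrow> H x < 0"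
proof -
  have "a < b"
  proof (rule ccontr)
    assume "\<not> a < b"
    then have "H a \<le> H b"
      using dec[of b a] \<open>l < b\<close> by (cases "a = b") auto
    then show False
      using assms by linarith
  qed
  then obtain g where g: "a \<le> g" "g \<le> b" "H g = 0"
    using IVT2'[of H b 0 a] assms continuous_on_subset[OF cont, of "{a..b}"] by force
  show ?thesis
  proof
    show "l < g" using g \<open>l < a\<close> by linarith
    then show "H x > 0" if "l < x" "x < g" for x
      using dec[of x g] that g by simp
    show "H x < 0" if "g < x" for x
      using dec[of g x] that g \<open>l < g\<close> by simp
  qed (fact g)
qed

definition sbl_ell_numerator :: "real \<Rightarrow> real \<Rightarrow> complex \<Rightarrow> real \<Rightarrow> real \<Rightarrow> real \<Rightarrow> real" where
  "sbl_ell_numerator \<rho> s q \<epsilon> \<eta> \<gamma> =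
     - \<eta> * s\<^sup>2 * \<gamma>\<^sup>2 + (s\<^sup>2 * (\<epsilon> - 1 - \<rho>) - 2 * \<eta> * s) * \<gamma>
     + (\<rho> * ((cmod q)\<^sup>2 - s) + 2 * (\<epsilon> - 1) * s - \<eta>) + (\<epsilon> - 1) / \<gamma>"

lemma sbl_ell_has_real_derivative:
  assumes "s \<ge> 0" "\<gamma> > 0"
  shows "(sbl_ell \<rho> s q \<epsilon> \<eta> has_real_derivative
           sbl_ell_numerator \<rho> s q \<epsilon> \<eta> \<gamma> / (1 + \<gamma> * s)\<^sup>2) (at \<gamma>)"
proof -
  have pos: "1 + \<gamma> * s > 0" and "inverse \<gamma> + s > 0" "\<gamma> \<noteq> 0"
    using assms by (simp_all add: add_pos_nonneg)
  then have "inverse \<gamma> + s \<noteq> 0" by simp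
  have "(sbl_ell \<rho> s q \<epsilon> \<eta> has_real_derivative
      - \<rho> * s / (1 + \<gamma> * s) + \<rho> * (cmod q)\<^sup>2 / (1 + \<gamma> * s)\<^sup>2 + (\<epsilon> - 1) / \<gamma> - \<eta>) (at \<gamma>)"
    unfolding sbl_ell_def[abs_def]
    by (rule derivative_eq_intros refl pos \<open>\<gamma> > 0\<close> \<open>inverse \<gamma> + s \<noteq> 0\<close> \<open>\<gamma> \<noteq> 0\<close>)+
      (use pos \<open>\<gamma> \<noteq> 0\<close> in \<open>simp add: field_simps power2_eq_square\<close>)
  moreover have "- \<rho> * s / (1 + \<gamma> * s) + \<rho> * (cmod q)\<^sup>2 / (1 + \<gamma> * s)\<^sup>2 + (\<epsilon> - 1) / \<gamma> - \<eta>
      = sbl_ell_numerator \<rho> s q \<epsilon> \<eta> \<gamma> / (1 + \<gamma> * s)\<^sup>2"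
  proof -
    define u where "u = 1 + \<gamma> * s"
    have "u \<noteq> 0" using pos by (simp add: u_def)
    have "(- \<rho> * s / u + \<rho> * (cmod q)\<^sup>2 / u\<^sup>2 + (\<epsilon> - 1) / \<gamma> - \<eta>) * u\<^sup>2
        = - \<rho> * s * u + \<rho> * (cmod q)\<^sup>2 + (\<epsilon> - 1) * u\<^sup>2 / \<gamma> - \<eta> * u\<^sup>2"
      using \<open>u \<noteq> 0\<close> \<open>\<gamma> \<noteq> 0\<close> by (simp add: field_simps power2_eq_square)
    also have "\<dots> = sbl_ell_numerator \<rho> s q \<epsilon> \<eta> \<gamma>"
      using \<open>\<gamma> \<noteq> 0\<close> by (simp add: u_def sbl_ell_numerator_def field_simps power2_eq_square)
    finally show ?thesis
      using \<open>u \<noteq> 0\<close> by (simp add: u_def eq_divide_eq)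
  qed
  ultimately show ?thesis by simp
qed

lemma sbl_ell_stationary_iff:
  assumes "s \<ge> 0" "\<gamma> > 0"
  shows "(sbl_ell \<rho> s q \<epsilon> \<eta> has_real_derivative 0) (at \<gamma>) \<longleftrightarrow> sbl_ell_numerator \<rho> s q \<epsilon> \<eta> \<gamma> = 0"
proof -
  note deriv = sbl_ell_has_real_derivative[OF assms, of \<rho> q \<epsilon> \<eta>]
  have "1 + \<gamma> * s > 0"
    using assms by (simp add: add_pos_nonneg)
  then have "(1 + \<gamma> * s)\<^sup>2 \<noteq> 0"
    by simp
  then have "sbl_ell_numerator \<rho> s q \<epsilon> \<eta> \<gamma> / (1 + \<gamma> * s)\<^sup>2 = 0 \<longleftrightarrow> sbl_ell_numerator \<rho> s q \<epsilon> \<eta> \<gamma> = 0"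
    by simp
  then show ?thesis
    using DERIV_unique[OF deriv] deriv by metis
qed

lemma sbl_ell_numerator_sign_change:
  assumes "s > 0" "\<eta> > 0" "1 < \<epsilon>" "\<epsilon> \<le> 1 + \<rho>"
  obtains g where "g > 0" "sbl_ell_numerator \<rho> s q \<epsilon> \<eta> g = 0"
    "\<And>x. 0 < x \<Longrightarrow> x < g \<Longrightarrow> sbl_ell_numerator \<rho> s q \<epsilon> \<eta> x > 0"
    "\<And>x. g < x \<Longrightarrow> sbl_ell_numerator \<rho> s q \<epsilon> \<eta> x < 0"
proof -
  define c3 c2 c1 c0 where "c3 = - \<eta> * s\<^sup>2" and "c2 = s\<^sup>2 * (\<epsilon> - 1 - \<rho>) - 2 * \<eta> * s"
    and "c1 = \<rho> * ((cmod q)\<^sup>2 - s) + 2 * (\<epsilon> - 1) * s - \<eta>" and "c0 = \<epsilon> - 1"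
  have N: "sbl_ell_numerator \<rho> s q \<epsilon> \<eta> = (\<lambda>x. c3 * x\<^sup>2 + c2 * x + c1 + c0 / x)"
    by (auto simp: sbl_ell_numerator_def c3_def c2_def c1_def c0_def)
  have "c3 < 0" "c0 > 0"
    using assms by (simp_all add: c3_def c0_def)
  have "s\<^sup>2 * (\<epsilon> - 1 - \<rho>) \<le> 0" "2 * \<eta> * s > 0"
    using assms by (simp_all add: mult_nonneg_nonpos)
  then have "c2 \<le> 0"
    unfolding c2_def by linarith
  have dec: "sbl_ell_numerator \<rho> s q \<epsilon> \<eta> y < sbl_ell_numerator \<rho> s q \<epsilon> \<eta> x"
    if "0 < x" "x < y" for x y
    unfolding N using quadratic_plus_reciprocal_strict_decreasing \<open>c3 < 0\<close> \<open>c2 \<le> 0\<close> \<open>c0 > 0\<close> that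
    by simp
  obtain a where "a > 0" "sbl_ell_numerator \<rho> s q \<epsilon> \<eta> a > 0"
    unfolding N using quadratic_plus_reciprocal_pos_near_zero[OF \<open>c0 > 0\<close>] by blast
  obtain b where "b > 0" "sbl_ell_numerator \<rho> s q \<epsilon> \<eta> b < 0"
    unfolding N using quadratic_plus_reciprocal_neg_at_infinity[OF \<open>c3 < 0\<close> \<open>c2 \<le> 0\<close>] by blast
  have "continuous_on {0<..} (sbl_ell_numerator \<rho> s q \<epsilon> \<eta>)"
    unfolding N by (auto intro!: continuous_intros)
  from strict_decreasing_sign_change[OF this dec \<open>a > 0\<close> _ \<open>b > 0\<close>] show ?thesis
    using that \<open>sbl_ell_numerator \<rho> s q \<epsilon> \<eta> a > 0\<close> \<open>sbl_ell_numerator \<rho> s q \<epsilon> \<eta> b < 0\<close> by blast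
qed

theorem proposition2:
  fixes \<rho> s \<eta> \<epsilon> :: real and q :: complex
  assumes "\<rho> \<in> {1/2, 1}" and "s > 0" and "\<eta> > 0"
    and "1 < \<epsilon>" and "\<epsilon> \<le> 1 + \<rho>"
  shows "(\<exists>!\<gamma>. \<gamma> > 0 \<and> (sbl_ell \<rho> s q \<epsilon> \<eta> has_real_derivative 0) (at \<gamma>))
       \<and> (\<forall>\<gamma>>0. (sbl_ell \<rho> s q \<epsilon> \<eta> has_real_derivative 0) (at \<gamma>) \<longrightarrow>
             (\<forall>x>0. sbl_ell \<rho> s q \<epsilon> \<eta> x \<le> sbl_ell \<rho> s q \<epsilon> \<eta> \<gamma>))"
proof -
  obtain g where g: "g > 0" "sbl_ell_numerator \<rho> s q \<epsilon> \<eta> g = 0"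
    and left: "\<And>x. 0 < x \<Longrightarrow> x < g \<Longrightarrow> sbl_ell_numerator \<rho> s q \<epsilon> \<eta> x > 0"
    and right: "\<And>x. g < x \<Longrightarrow> sbl_ell_numerator \<rho> s q \<epsilon> \<eta> x < 0"
    using sbl_ell_numerator_sign_change assms(2-5) by blast
  have stationary: "(sbl_ell \<rho> s q \<epsilon> \<eta> has_real_derivative 0) (at \<gamma>) \<longleftrightarrow> \<gamma> = g" if "\<gamma> > 0" for \<gamma>
  proof -
    have "sbl_ell_numerator \<rho> s q \<epsilon> \<eta> \<gamma> = 0 \<longleftrightarrow> \<gamma> = g"
      using g left[OF that] right by (cases \<gamma> g rule: linorder_cases) force+
    then show ?thesis
      using sbl_ell_stationary_iff[of s \<gamma>] that \<open>s > 0\<close> by simp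
  qed
  have "sbl_ell \<rho> s q \<epsilon> \<eta> x \<le> sbl_ell \<rho> s q \<epsilon> \<eta> g" if "x > 0" for x
  proof (rule DERIV_sign_change_imp_max[OF sbl_ell_has_real_derivative _ _ that \<open>g > 0\<close>])
    show "0 \<le> sbl_ell_numerator \<rho> s q \<epsilon> \<eta> y / (1 + y * s)\<^sup>2" if "0 < y" "y < g" for y
      using left[OF that] by simp
    show "sbl_ell_numerator \<rho> s q \<epsilon> \<eta> y / (1 + y * s)\<^sup>2 \<le> 0" if "g < y" for y
      using right[OF that] by (simp add: divide_nonpos_nonneg)
  qed (use \<open>s > 0\<close> in auto)
  then show ?thesis
    using stationary \<open>g > 0\<close> by blast
qed

end
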